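(* Let $\mathbb{X}$ be a real Banach space and let $f\in \mathbb{X}^{**}$ be weak$^*$ continuous. Let $\mathbb{Y}$ be a linear subspace of $\mathbb{X}^{**}$ such that each member of $\mathbb{Y}$ is weak$^*$ continuous and $f\notin \mathbb{Y}$. Suppose that $g_0\in \mathbb{Y}$ is a best approximation to $f$ out of $\mathbb{Y}$. Then for any finite-dimensional subspace $\mathbb{Z}$ of $\mathbb{Y}$ containing $g_0$, $$\|f-g_0\|=\mathrm{dist}(f,\mathbb{Y})=\max \Big\{ |f(x)|: x\in \bigcap_{g\in \mathbb{Z}}\mathcal{N}(g)\cap S_{\mathbb{X}^*}\Big\}.$$
   Context: A functional in $\mathbb{X}^{**}$ is weak$^*$ continuous iff it equals $\psi(x)$ for some $x\in\mathbb{X}$, $\psi$ the canonical embedding. $\mathcal{N}(h)=\{x^*\in\mathbb{X}^*:h(x^* )=0\}$; $S_{\mathbb{X}^*}$ is the unit sphere of $\mathbb{X}^*$; $\mathrm{dist}(f,\mathbb{Y})=\inf_{g\in\mathbb{Y}}\|f-g\|$, and $g_0$ is a best approximation if $\|f-g_0\|=\mathrm{dist}(f,\mathbb{Y})$. *)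

theory Defs
  imports "HOL-Analysis.Analysis"
begin

text \<open>The dual X* of a real Banach space X is modelled as the type of bounded linear
functionals 'a \<Rightarrow>L real; the bidual X** as ('a \<Rightarrow>L real) \<Rightarrow>L real.\<close>

definition weak_star_topology :: "('a::real_normed_vector \<Rightarrow>\<^sub>L real) topology" where
  "weak_star_topology =
     topology_generated_by {{l. blinfun_apply l x \<in> U} | x U. open U}"

definition weak_star_continuous :: "(('a::real_normed_vector \<Rightarrow>\<^sub>L real) \<Rightarrow>\<^sub>L real) \<Rightarrow> bool" where
  "weak_star_continuous h \<longleftrightarrow>
     continuous_map weak_star_topology euclideanreal (blinfun_apply h)"

end

theory Submission
  imports Defs
begin

text \<open>Since f and the members of Y are weak* continuous, they are evaluations at points of X:
f = \<psi> x0 and Z = \<psi>(Z0) for a subspace Z0 of X. If \<phi> \<in> X* annihilates Z and \<parallel>\<phi>\<parallel> = 1, then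
\<bar>f(\<phi>)\<bar> = \<bar>(f - g0)(\<phi>)\<bar> \<le> \<parallel>f - g0\<parallel>. Conversely, \<parallel>x0 - z\<parallel> \<ge> \<parallel>f - \<psi> z\<parallel> \<ge> dist(f, Y) for z \<in> Z0, so the
Hahn-Banach theorem on X yields \<phi> with \<parallel>\<phi>\<parallel> \<le> 1, vanishing on Z0, and \<phi>(x0) = dist(f, Y); then
dist(f, Y) = (f - g0)(\<phi>) \<le> dist(f, Y) \<parallel>\<phi>\<parallel> forces \<parallel>\<phi>\<parallel> = 1.\<close>

definition sublinear :: "('a::real_vector \<Rightarrow> real) \<Rightarrow> bool" where
  "sublinear p \<longleftrightarrow>
     (\<forall>x y. p (x + y) \<le> p x + p y) \<and> (\<forall>c x. 0 \<le> c \<longrightarrow> p (c *\<^sub>R x) = c * p x)"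

lemma sublinear_norm: "sublinear norm"
  unfolding sublinear_def by (simp add: norm_triangle_ineq)

lemma sublinear_zero: "sublinear p \<Longrightarrow> p 0 = 0"
  unfolding sublinear_def by (metis mult_zero_left order_refl scaleR_zero_left)

lemma subspace_Union_chain:
  assumes "C \<noteq> {}" "subset.chain {S. subspace S} C"
  shows "subspace (\<Union>C)"
proof -
  have sub: "\<And>S. S \<in> C \<Longrightarrow> subspace S"
    and comp: "\<And>S T. S \<in> C \<Longrightarrow> T \<in> C \<Longrightarrow> S \<subseteq> T \<or> T \<subseteq> S"
    using assms(2) by (auto simp: subset_chain_def)
  show ?thesis
    unfolding subspace_def
  proof (intro conjI ballI allI)
    show "0 \<in> \<Union>C" using assms(1) sub subspace_0 by blast
  next
    fix x y assume "x \<in> \<Union>C" "y \<in> \<Union>C"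
    then obtain S where "S \<in> C" "x \<in> S" "y \<in> S" using comp by blast
    then show "x + y \<in> \<Union>C" using sub subspace_add by blast
  next
    fix c x assume "x \<in> \<Union>C"
    then show "c *\<^sub>R x \<in> \<Union>C" using sub subspace_scale by blast
  qed
qed

text \<open>Hahn-Banach is proved for graphs, i.e. subspaces of X \<times> \<real>: a subspace graph dominated by a
sublinear functional is automatically single-valued, so no well-definedness argument is needed.\<close>

lemma dominated_subspace_graph_unique:
  assumes "sublinear p" "subspace G" "\<forall>(y, a)\<in>G. a \<le> p y" "(x, a) \<in> G" "(x, b) \<in> G"
  shows "a = b"
proof -
  have "(0, a - b) \<in> G" "(0, b - a) \<in> G"
    using subspace_diff[OF assms(2) assms(4,5)] subspace_diff[OF assms(2) assms(5,4)] by simp_all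
  then have "a - b \<le> p 0" "b - a \<le> p 0"
    using assms(3) by auto
  then show ?thesis
    using sublinear_zero[OF assms(1)] by simp
qed

lemma dominated_subspace_graph_extension:
  assumes p: "sublinear p" and G: "subspace G" "\<forall>(y, a)\<in>G. a \<le> p y"
  shows "\<exists>c. \<forall>(y, a)\<in>G. \<forall>t. a + t * c \<le> p (y + t *\<^sub>R x)"
proof -
  have sub: "p (u + v) \<le> p u + p v" and hom: "0 \<le> s \<Longrightarrow> p (s *\<^sub>R u) = s * p u" for u v s
    using p by (auto simp: sublinear_def)
  have sep: "a - p (y - x) \<le> p (z + x) - b" if "(y, a) \<in> G" "(z, b) \<in> G" for y a z b
  proof -
    have "a + b \<le> p (y + z)"
      using G subspace_add[OF G(1) that] by auto
    also have "\<dots> \<le> p (y - x) + p (z + x)"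
      using sub[of "y - x" "z + x"] by (simp add: algebra_simps)
    finally show ?thesis by simp
  qed
  \<comment> \<open>by sep, any c between the sup of the left-hand sides and the inf of the right-hand sides works\<close>
  define c where "c = (SUP (y, a)\<in>G. a - p (y - x))"
  have G0: "(0, 0) \<in> G"
    using subspace_0[OF G(1)] by (simp add: zero_prod_def)
  have below: "a - p (y - x) \<le> c" if "(y, a) \<in> G" for y a
    unfolding c_def using that sep[OF _ G0]
    by (intro cSUP_upper2[OF _ that]) (auto intro!: bdd_aboveI2)
  have above: "c \<le> p (z + x) - b" if "(z, b) \<in> G" for z b
    unfolding c_def using G0 sep[OF _ that] by (intro cSUP_least) auto
  have "a + t * c \<le> p (y + t *\<^sub>R x)" if ya: "(y, a) \<in> G" for y a t
  proof -
    have scaled: "(s *\<^sub>R y, s * a) \<in> G" for s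
      using subspace_scale[OF G(1) ya, of s] by simp
    consider "t = 0" | "t > 0" | "t < 0" by linarith
    then show ?thesis
    proof cases
      case 1 then show ?thesis using G(2) ya by auto
    next
      case 2
      have "t * c \<le> t * (p (inverse t *\<^sub>R y + x) - inverse t * a)"
        using above[OF scaled] 2 by (simp add: mult_left_mono)
      also have "\<dots> = p (y + t *\<^sub>R x) - a"
        using 2 hom[of t "inverse t *\<^sub>R y + x"] by (simp add: algebra_simps)
      finally show ?thesis by simp
    next
      case 3
      have "inverse (-t) * a - p (inverse (-t) *\<^sub>R y - x) \<le> c"
        by (rule below[OF scaled])
      then have "(-t) * (inverse (-t) * a - p (inverse (-t) *\<^sub>R y - x)) \<le> (-t) * c"
        using 3 by (intro mult_left_mono) auto
      also have "(-t) * (inverse (-t) * a - p (inverse (-t) *\<^sub>R y - x)) = a - p (y + t *\<^sub>R x)"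
        using 3 hom[of "-t" "inverse (-t) *\<^sub>R y - x"] by (simp add: algebra_simps)
      finally show ?thesis by simp
    qed
  qed
  then show ?thesis by blast
qed

lemma exists_maximal_dominated_subspace_graph:
  assumes "subspace G" "\<forall>(x, a)\<in>G. a \<le> p x"
  obtains M where "G \<subseteq> M" "subspace M" "\<forall>(x, a)\<in>M. a \<le> p x"
    "\<And>X. subspace X \<Longrightarrow> \<forall>(x, a)\<in>X. a \<le> p x \<Longrightarrow> M \<subseteq> X \<Longrightarrow> X = M"
proof -
  define A where "A = {M. G \<subseteq> M \<and> subspace M \<and> (\<forall>(x, a)\<in>M. a \<le> p x)}"
  have "\<exists>M\<in>A. \<forall>X\<in>A. M \<subseteq> X \<longrightarrow> X = M"
  proof (rule subset_Zorn_nonempty)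
    have "G \<in> A" using assms by (simp add: A_def)
    then show "A \<noteq> {}" by blast
  next
    fix C assume "C \<noteq> {}" and chain: "subset.chain A C"
    then have CA: "C \<subseteq> A"
      by (simp add: subset_chain_def)
    then have "subset.chain {S. subspace S} C"
      using chain by (auto simp: subset_chain_def A_def)
    then have "subspace (\<Union>C)"
      by (rule subspace_Union_chain[OF \<open>C \<noteq> {}\<close>])
    moreover have "G \<subseteq> \<Union>C" "\<forall>(x, a)\<in>\<Union>C. a \<le> p x"
      using \<open>C \<noteq> {}\<close> CA by (auto simp: A_def)
    ultimately show "\<Union>C \<in> A"
      by (simp add: A_def)
  qed
  then obtain M where "M \<in> A" and max: "\<And>X. X \<in> A \<Longrightarrow> M \<subseteq> X \<Longrightarrow> X = M"
    by blast
  then have "G \<subseteq> M" "subspace M" "\<forall>(x, a)\<in>M. a \<le> p x"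
    by (simp_all add: A_def)
  moreover have "X = M" if "subspace X" "\<forall>(x, a)\<in>X. a \<le> p x" "M \<subseteq> X" for X
    using that \<open>G \<subseteq> M\<close> by (intro max) (auto simp: A_def)
  ultimately show ?thesis
    by (rule that)
qed

lemma maximal_dominated_subspace_graph_total:
  assumes p: "sublinear p" and M: "subspace M" "\<forall>(y, a)\<in>M. a \<le> p y"
    and max: "\<And>X. subspace X \<Longrightarrow> \<forall>(y, a)\<in>X. a \<le> p y \<Longrightarrow> M \<subseteq> X \<Longrightarrow> X = M"
  shows "\<exists>a. (x, a) \<in> M"
proof -
  obtain c where c: "\<forall>(y, a)\<in>M. \<forall>t. a + t * c \<le> p (y + t *\<^sub>R x)"
    using dominated_subspace_graph_extension[OF p M] by blast
  define M' where "M' = {m + v | m v. m \<in> M \<and> v \<in> span {(x, c)}}"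
  have "subspace M'"
    unfolding M'_def using M(1) subspace_span by (rule subspace_sums)
  moreover have "\<forall>(y, a)\<in>M'. a \<le> p y"
  proof clarify
    fix y a assume "(y, a) \<in> M'"
    then obtain y0 a0 t where "(y0, a0) \<in> M" "y = y0 + t *\<^sub>R x" "a = a0 + t * c"
      unfolding M'_def span_singleton by auto
    then show "a \<le> p y" using c by auto
  qed
  moreover have "M \<subseteq> M'"
    using span_zero[of "{(x, c)}"] unfolding M'_def
    by (metis (mono_tags, lifting) add.right_neutral mem_Collect_eq subsetI)
  ultimately have "M' = M"
    by (rule max)
  moreover have "(x, c) \<in> M'"
    using subspace_0[OF M(1)] span_base[of "(x, c)" "{(x, c)}"] unfolding M'_def
    by (metis (mono_tags, lifting) add_0 insertI1 mem_Collect_eq)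
  ultimately show ?thesis by blast
qed

theorem hahn_banach_graph:
  assumes p: "sublinear p" and G: "subspace G" "\<forall>(x, a)\<in>G. a \<le> p x"
  shows "\<exists>l. linear l \<and> (\<forall>x. l x \<le> p x) \<and> (\<forall>(x, a)\<in>G. l x = a)"
proof -
  obtain M where M: "G \<subseteq> M" "subspace M" "\<forall>(x, a)\<in>M. a \<le> p x"
    and max: "\<And>X. subspace X \<Longrightarrow> \<forall>(x, a)\<in>X. a \<le> p x \<Longrightarrow> M \<subseteq> X \<Longrightarrow> X = M"
    using exists_maximal_dominated_subspace_graph[OF G] by blast
  define l where "l x = (SOME a. (x, a) \<in> M)" for x
  have lM: "(x, l x) \<in> M" for x
    unfolding l_def using maximal_dominated_subspace_graph_total[OF p M(2,3) max] by (rule someI_ex)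
  have graph: "l x = a" if "(x, a) \<in> M" for x a
    using dominated_subspace_graph_unique[OF p M(2,3) lM that] .
  have "linear l"
  proof
    show "l (x + y) = l x + l y" for x y
      using graph subspace_add[OF M(2) lM lM] by simp
    show "l (r *\<^sub>R x) = r *\<^sub>R l x" for r x
      using graph subspace_scale[OF M(2) lM] by simp
  qed
  moreover have "\<forall>x. l x \<le> p x" using M(3) lM by blast
  moreover have "\<forall>(x, a)\<in>G. l x = a" using M(1) graph by blast
  ultimately show ?thesis by blast
qed

lemma linear_le_norm_imp_blinfun:
  fixes l :: "'a::real_normed_vector \<Rightarrow> real"
  assumes l: "linear l" "\<And>x. l x \<le> norm x"
  obtains L :: "'a \<Rightarrow>\<^sub>L real" where "blinfun_apply L = l" "norm L \<le> 1"
proof -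
  have bound: "norm (l x) \<le> norm x * 1" for x
    using l(2)[of x] l(2)[of "- x"] linear_neg[OF l(1), of x] by auto
  have "bounded_linear l"
    using linear_add[OF l(1)] linear_scale[OF l(1)] bound by (rule bounded_linear_intro)
  then have "blinfun_apply (Blinfun l) = l"
    by (rule bounded_linear_Blinfun_apply)
  moreover have "norm (Blinfun l) \<le> 1"
    using bound by (intro norm_blinfun_bound) (auto simp: calculation)
  ultimately show ?thesis by (rule that)
qed

lemma mult_le_norm_add_scaleR:
  fixes x :: "'a::real_normed_vector"
  assumes S: "subspace S" and "0 \<le> d" and d: "\<And>z. z \<in> S \<Longrightarrow> d \<le> norm (x - z)"
    and z: "z \<in> S"
  shows "t * d \<le> norm (z + t *\<^sub>R x)"
proof (cases "t > 0")
  case True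
  have "d \<le> norm (x - (- inverse t *\<^sub>R z))"
    by (rule d[OF subspace_scale[OF S z]])
  then have "t * d \<le> t * norm (x - (- inverse t *\<^sub>R z))"
    using True by (intro mult_left_mono) auto
  also have "\<dots> = norm (t *\<^sub>R (x - (- inverse t *\<^sub>R z)))"
    using True by simp
  also have "t *\<^sub>R (x - (- inverse t *\<^sub>R z)) = z + t *\<^sub>R x"
    using True by (simp add: algebra_simps)
  finally show ?thesis .
next
  case False
  then have "t * d \<le> 0"
    using \<open>0 \<le> d\<close> by (simp add: mult_nonpos_nonneg)
  then show ?thesis
    using norm_ge_zero[of "z + t *\<^sub>R x"] by linarith
qed

lemma exists_functional_annihilating_subspace:
  fixes x :: "'a::real_normed_vector"
  assumes S: "subspace S" and "0 \<le> d" and "\<And>z. z \<in> S \<Longrightarrow> d \<le> norm (x - z)"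
  shows "\<exists>L :: 'a \<Rightarrow>\<^sub>L real. norm L \<le> 1 \<and> (\<forall>z\<in>S. blinfun_apply L z = 0) \<and> blinfun_apply L x = d"
proof -
  define G where "G = {u + v | u v. u \<in> (\<lambda>z. (z, 0 :: real)) ` S \<and> v \<in> span {(x, d)}}"
  have "linear (\<lambda>z. (z, 0 :: real))"
    by (rule linearI) simp_all
  then have "subspace G"
    unfolding G_def using S by (intro subspace_sums subspace_span linear_subspace_image)
  moreover have "\<forall>(y, a)\<in>G. a \<le> norm y"
  proof clarify
    fix y a assume "(y, a) \<in> G"
    then obtain u v where "(y, a) = u + v" and "u \<in> (\<lambda>z. (z, 0)) ` S" "v \<in> span {(x, d)}"
      unfolding G_def by blast
    moreover obtain z where "z \<in> S" "u = (z, 0)"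
      using \<open>u \<in> (\<lambda>z. (z, 0)) ` S\<close> by blast
    moreover obtain t where "v = t *\<^sub>R (x, d)"
      using \<open>v \<in> span {(x, d)}\<close> by (auto simp: span_singleton)
    ultimately show "a \<le> norm y"
      using mult_le_norm_add_scaleR[OF assms, of z t] by simp
  qed
  ultimately obtain l where l: "linear l" "\<And>y. l y \<le> norm y" "\<forall>(y, a)\<in>G. l y = a"
    using hahn_banach_graph[OF sublinear_norm] by metis
  obtain L :: "'a \<Rightarrow>\<^sub>L real" where L: "blinfun_apply L = l" "norm L \<le> 1"
    using linear_le_norm_imp_blinfun[OF l(1,2)] by blast
  have "(z, 0) \<in> G" if "z \<in> S" for z
    unfolding G_def using that
    by (intro CollectI exI[of _ "(z, 0)"] exI[of _ 0]) (simp add: span_zero)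
  then have "\<forall>z\<in>S. blinfun_apply L z = 0"
    using l(3) L(1) by fast
  moreover have "(x, d) \<in> G"
    unfolding G_def using subspace_0[OF S]
    by (intro CollectI exI[of _ 0] exI[of _ "(x, d)"]) (simp add: span_base zero_prod_def)
  then have "blinfun_apply L x = d"
    using l(3) L(1) by fast
  ultimately show ?thesis
    using L(2) by blast
qed

lift_definition canonical_embedding :: "'a::real_normed_vector \<Rightarrow> ('a \<Rightarrow>\<^sub>L real) \<Rightarrow>\<^sub>L real"
  is "\<lambda>x l. blinfun_apply l x"
  by (rule blinfun.bounded_linear_left)

lemmas canonical_embedding_apply [simp] = canonical_embedding.rep_eq

lemma linear_canonical_embedding: "linear canonical_embedding"
  by (rule linearI; rule blinfun_eqI) (simp_all add: blinfun.bilinear_simps)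

lemma norm_canonical_embedding_le: "norm (canonical_embedding x) \<le> norm x"
proof (rule norm_blinfun_bound)
  show "norm (canonical_embedding x l) \<le> norm x * norm l" for l
    using norm_blinfun[of l x] by (simp add: mult.commute)
qed simp

lemma topspace_weak_star_topology [simp]: "topspace weak_star_topology = UNIV"
  unfolding weak_star_topology_def topology_generated_by_topspace
  by (blast intro: exI[of _ 0] exI[of _ UNIV])

lemma weak_star_open_contains_basic_nbhd:
  fixes V :: "('a::real_normed_vector \<Rightarrow>\<^sub>L real) set"
  assumes "openin weak_star_topology V" and "l0 \<in> V"
  shows "\<exists>F e. finite F \<and> 0 < e \<and>
           (\<forall>l. (\<forall>x\<in>F. \<bar>blinfun_apply l x - blinfun_apply l0 x\<bar> < e) \<longrightarrow> l \<in> V)"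
proof -
  have "generate_topology_on {{l. blinfun_apply l x \<in> U} | x U. open U} V"
    using assms(1) unfolding weak_star_topology_def by (rule openin_topology_generated_by)
  then show ?thesis
    using assms(2)
  proof (induction arbitrary: l0)
    case Empty
    then show ?case by simp
  next
    case (Int a b)
    obtain F1 e1 where "finite F1" "0 < e1"
      "\<forall>l. (\<forall>x\<in>F1. \<bar>blinfun_apply l x - blinfun_apply l0 x\<bar> < e1) \<longrightarrow> l \<in> a"
      using Int.IH(1) Int.prems by blast
    moreover obtain F2 e2 where "finite F2" "0 < e2"
      "\<forall>l. (\<forall>x\<in>F2. \<bar>blinfun_apply l x - blinfun_apply l0 x\<bar> < e2) \<longrightarrow> l \<in> b"
      using Int.IH(2) Int.prems by blast
    ultimately show ?case
      by (intro exI[of _ "F1 \<union> F2"] exI[of _ "min e1 e2"]) auto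
  next
    case (UN K)
    then obtain k where "k \<in> K" "l0 \<in> k" by blast
    with UN.IH[of k l0] show ?case by blast
  next
    case (Basis s)
    then obtain x U where s: "s = {l. blinfun_apply l x \<in> U}" and "open U" by auto
    moreover have "blinfun_apply l0 x \<in> U"
      using Basis.prems s by blast
    ultimately obtain e where "0 < e" "\<And>y. dist y (blinfun_apply l0 x) < e \<Longrightarrow> y \<in> U"
      by (metis open_dist)
    then show ?case
      by (intro exI[of _ "{x}"] exI[of _ e]) (auto simp: s dist_real_def)
  qed
qed

lemma linear_functional_eq_evaluation:
  fixes h :: "('a::real_normed_vector \<Rightarrow>\<^sub>L real) \<Rightarrow> real"
  assumes "finite F" and "linear h" and "\<And>l. \<forall>x\<in>F. blinfun_apply l x = 0 \<Longrightarrow> h l = 0"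
  shows "\<exists>y. \<forall>l. h l = blinfun_apply l y"
  using assms
proof (induction F arbitrary: h rule: finite_induct)
  case empty
  then show ?case by (intro exI[of _ 0]) auto
next
  case (insert a F)
  show ?case
  proof (cases "\<exists>l :: 'a \<Rightarrow>\<^sub>L real. (\<forall>x\<in>F. blinfun_apply l x = 0) \<and> blinfun_apply l a = 1")
    case True
    then obtain l1 :: "'a \<Rightarrow>\<^sub>L real" where l1: "\<forall>x\<in>F. blinfun_apply l1 x = 0" "blinfun_apply l1 a = 1"
      by blast
    define h' where "h' l = h l - blinfun_apply l a * h l1" for l
    have "linear h'"
      unfolding h'_def using insert.prems(1)
      by (intro linearI) (simp_all add: linear_add linear_scale blinfun.add_left
          blinfun.scaleR_left algebra_simps)
    moreover have "h' l = 0" if "\<forall>x\<in>F. blinfun_apply l x = 0" for l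
    proof -
      have "h (l - blinfun_apply l a *\<^sub>R l1) = 0"
        using that l1 by (intro insert.prems(2)) (auto simp: blinfun.diff_left blinfun.scaleR_left)
      then show ?thesis
        unfolding h'_def by (simp add: linear_diff[OF insert.prems(1)] linear_scale[OF insert.prems(1)])
    qed
    ultimately obtain y where y: "\<And>l. h' l = blinfun_apply l y"
      using insert.IH by metis
    have "h l = blinfun_apply l (y + h l1 *\<^sub>R a)" for l
      using y[of l] unfolding h'_def by (simp add: blinfun.bilinear_simps algebra_simps)
    then show ?thesis by blast
  next
    case False
    have "h l = 0" if "\<forall>x\<in>F. blinfun_apply l x = 0" for l
    proof (cases "blinfun_apply l a = 0")
      case True
      then show ?thesis using that insert.prems(2) by simp
    next
      case nonzero: False
      have "\<forall>x\<in>F. blinfun_apply (inverse (blinfun_apply l a) *\<^sub>R l) x = 0"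
        using that by (simp add: blinfun.scaleR_left)
      with False have "blinfun_apply (inverse (blinfun_apply l a) *\<^sub>R l) a \<noteq> 1" by blast
      with nonzero show ?thesis by (simp add: blinfun.scaleR_left)
    qed
    then show ?thesis using insert.IH insert.prems(1) by blast
  qed
qed

lemma weak_star_continuous_imp_canonical_embedding:
  assumes "weak_star_continuous h"
  shows "\<exists>x. h = canonical_embedding x"
proof -
  have "openin weak_star_topology {l. \<bar>blinfun_apply h l\<bar> < 1}"
    using openin_continuous_map_preimage[OF assms[unfolded weak_star_continuous_def], of "ball 0 1"]
    by (simp add: dist_real_def)
  moreover have "0 \<in> {l. \<bar>blinfun_apply h l\<bar> < 1}"
    by simp
  ultimately obtain F e where "finite F" "0 < e" and nbhd:
      "\<forall>l. (\<forall>x\<in>F. \<bar>blinfun_apply l x - blinfun_apply 0 x\<bar> < e) \<longrightarrow> l \<in> {l. \<bar>blinfun_apply h l\<bar> < 1}"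
    by (blast dest: weak_star_open_contains_basic_nbhd)
  have "blinfun_apply h l = 0" if "\<forall>x\<in>F. blinfun_apply l x = 0" for l
  proof -
    \<comment> \<open>every multiple of l lies in the neighbourhood, so h is bounded on the line through l\<close>
    have "\<bar>t\<bar> * \<bar>blinfun_apply h l\<bar> < 1" for t
      using nbhd[rule_format, of "t *\<^sub>R l"] that \<open>0 < e\<close>
      by (simp add: blinfun.scaleR_left blinfun.scaleR_right abs_mult)
    from this[of "2 / \<bar>blinfun_apply h l\<bar>"] show ?thesis
      by (cases "blinfun_apply h l = 0") auto
  qed
  then obtain x where "\<forall>l. blinfun_apply h l = blinfun_apply l x"
    using linear_functional_eq_evaluation[OF \<open>finite F\<close> bounded_linear.linear[OF blinfun.bounded_linear_right]] by blast
  then have "h = canonical_embedding x"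
    by (intro blinfun_eqI) simp
  then show ?thesis ..
qed

lemma exists_functional_annihilating_weak_star_subspace:
  fixes f :: "('a::real_normed_vector \<Rightarrow>\<^sub>L real) \<Rightarrow>\<^sub>L real"
  assumes "weak_star_continuous f" and "subspace Z" and "\<forall>g\<in>Z. weak_star_continuous g"
    and "0 \<le> d" and d: "\<And>g. g \<in> Z \<Longrightarrow> d \<le> norm (f - g)"
  shows "\<exists>L. norm L \<le> 1 \<and> (\<forall>g\<in>Z. blinfun_apply g L = 0) \<and> blinfun_apply f L = d"
proof -
  obtain x where f: "f = canonical_embedding x"
    using weak_star_continuous_imp_canonical_embedding[OF assms(1)] by blast
  define Z0 where "Z0 = canonical_embedding -` Z"
  have "subspace Z0"
    unfolding Z0_def using linear_canonical_embedding assms(2) by (rule linear_subspace_vimage)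
  have Z_embedded: "\<exists>z\<in>Z0. g = canonical_embedding z" if "g \<in> Z" for g
    using weak_star_continuous_imp_canonical_embedding that assms(3) unfolding Z0_def by blast
  have "d \<le> norm (x - z)" if "z \<in> Z0" for z
  proof -
    have "d \<le> norm (canonical_embedding (x - z))"
      using d[of "canonical_embedding z"] that
      by (simp add: f Z0_def linear_diff[OF linear_canonical_embedding])
    also have "\<dots> \<le> norm (x - z)"
      by (rule norm_canonical_embedding_le)
    finally show ?thesis .
  qed
  then obtain L where L: "norm L \<le> 1" "\<forall>z\<in>Z0. blinfun_apply L z = 0" "blinfun_apply L x = d"
    using exists_functional_annihilating_subspace[OF \<open>subspace Z0\<close> \<open>0 \<le> d\<close>] by blast
  moreover have "\<forall>g\<in>Z. blinfun_apply g L = 0"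
    using Z_embedded L(2) by fastforce
  ultimately show ?thesis
    by (auto simp: f)
qed

lemma abs_blinfun_apply_le_if_annihilated:
  fixes f g :: "'a::real_normed_vector \<Rightarrow>\<^sub>L real"
  assumes "blinfun_apply g x = 0"
  shows "\<bar>blinfun_apply f x\<bar> \<le> norm (f - g) * norm x"
  using norm_blinfun[of "f - g" x] assms by (simp add: blinfun.diff_left)

theorem theorem4p3:
  fixes f g0 :: "('a::banach \<Rightarrow>\<^sub>L real) \<Rightarrow>\<^sub>L real"
    and Y Z :: "(('a \<Rightarrow>\<^sub>L real) \<Rightarrow>\<^sub>L real) set"
  assumes "weak_star_continuous f"
    and "subspace Y"
    and "\<forall>g\<in>Y. weak_star_continuous g"
    and "f \<notin> Y"
    and "g0 \<in> Y"
    and "norm (f - g0) = infdist f Y"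
    and "subspace Z" and "Z \<subseteq> Y" and "\<exists>B. finite B \<and> Z = span B" and "g0 \<in> Z"
  shows "norm (f - g0) = infdist f Y \<and>
         (let S = {\<bar>blinfun_apply f x\<bar> | x. (\<forall>g\<in>Z. blinfun_apply g x = 0) \<and> norm x = 1}
          in infdist f Y \<in> S \<and> (\<forall>s\<in>S. s \<le> infdist f Y))"
proof -
  define d where "d = infdist f Y"
  have "0 < d"
    using assms(4-6) d_def by (metis zero_less_norm_iff right_minus_eq)
  moreover have "d \<le> norm (f - g)" if "g \<in> Z" for g
    using infdist_le[of g Y f] that assms(8) by (auto simp: d_def dist_norm)
  ultimately obtain L where L: "norm L \<le> 1" "\<forall>g\<in>Z. blinfun_apply g L = 0" "blinfun_apply f L = d"
    using exists_functional_annihilating_weak_star_subspace[OF assms(1,7)] assms(3,8)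
    by (metis less_imp_le subset_iff)
  have "d \<le> norm (f - g0) * norm L"
    using abs_blinfun_apply_le_if_annihilated[of g0 L f] L(2,3) assms(10) by simp
  then have "norm L = 1"
    using L(1) \<open>0 < d\<close> assms(6) d_def by (simp add: mult_le_cancel_left1)
  have "\<bar>blinfun_apply f x\<bar> \<le> d" if "\<forall>g\<in>Z. blinfun_apply g x = 0" "norm x = 1" for x
    using abs_blinfun_apply_le_if_annihilated[of g0 x f] that assms(6,10) d_def by simp
  moreover have "d \<in> {\<bar>blinfun_apply f x\<bar> | x. (\<forall>g\<in>Z. blinfun_apply g x = 0) \<and> norm x = 1}"
    using L(2,3) \<open>norm L = 1\<close> \<open>0 < d\<close> by (intro CollectI exI[of _ L]) simp
  ultimately show ?thesis
    using assms(6) unfolding Let_def d_def by blast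
qed

end
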